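(* Let $(\sigma,f)$ and $(\tau,g)$ be generalized equivariant maps from $K\ltimes Y$ to $G\ltimes X$, namely $K\ltimes Y\xleftarrow{\sigma}K'\ltimes Y'\xrightarrow{f}G\ltimes X$ and $K\ltimes Y\xleftarrow{\tau}K''\ltimes Y''\xrightarrow{g}G\ltimes X$. If $(\sigma,f)\Rightarrow(\tau,g)$, then $(\sigma,f)$ and $(\tau,g)$ are homotopic.
   Context: Translation groupoids $G\ltimes X$ have objects $X$, arrows $G\times X$, and arrows $(g,x):x\to gx$; all groups are discrete and act properly. $X^I$ is the space of continuous paths $[0,1]\to X$ with the compact-open topology and pointwise $G$-action. For $i\in\{0,1\}$, $\mathrm{ev}_i:G\ltimes X^I\to G\ltimes X$ is the equivariant map $(g,\alpha)\mapsto(g,\alpha(i))$. A natural transformation $\phi\sim\psi$ between strict morphisms is a continuous $T:K_0\to G_1$ with $T(x):\phi(x)\to\psi(x)$ natural in arrows. An essential equivalence is a strict morphism $\epsilon:\mathcal K\to\mathcal G$ satisfying two conditions. (i) The map $G_1\times^t_{G_0}K_0\to G_0$, $(g,k)\mapsto s(g)$, is an open surjection. (ii) $K_1$ is the pullback of $(s,t):G_1\to G_0\times G_0$ along $\epsilon\times\epsilon$. A generalized equivariant map $\mathcal K\xleftarrow{\epsilon}\mathcal J\xrightarrow{\phi}\mathcal G$ is a span of equivariant maps of translation groupoids with $\epsilon$ an essential equivalence. Two such, $(\epsilon,\phi)$ and $(\epsilon',\phi')$, are $2$-isomorphic, written $(\epsilon,\phi)\Rightarrow(\epsilon',\phi')$,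 if there are a translation groupoid $\mathcal L$ and equivariant essential equivalences $u:\mathcal L\to\mathcal J$, $v:\mathcal L\to\mathcal J'$ with $\epsilon u\sim\epsilon'v$ and $\phi u\sim\phi'v$. Homotopy: generalized maps $(\sigma,f)$ and $(\tau,g)$ from $K\ltimes Y$ to $G\ltimes X$ are homotopic if there is a generalized equivariant map $K\ltimes Y\xleftarrow{\epsilon}\tilde K\ltimes\tilde Y\xrightarrow{H}G\ltimes X^I$ with $(\sigma,f)\Rightarrow(\epsilon,\mathrm{ev}_0\circ H)$ and $(\tau,g)\Rightarrow(\epsilon,\mathrm{ev}_1\circ H)$. *)

theory Defs
  imports "HOL-Analysis.Analysis" "HOL-Algebra.Group"
begin

text \<open>A translation groupoid G \<ltimes> X is bundled as (G, action, X): a (discrete) group G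
  (HOL-Algebra), an action map, and a topological space X.\<close>

type_synonym ('g,'x) tg = "'g monoid \<times> ('g \<Rightarrow> 'x \<Rightarrow> 'x) \<times> 'x topology"

definition grp :: "('g,'x) tg \<Rightarrow> 'g monoid" where "grp T = fst T"
definition act :: "('g,'x) tg \<Rightarrow> 'g \<Rightarrow> 'x \<Rightarrow> 'x" where "act T = fst (snd T)"
definition sp :: "('g,'x) tg \<Rightarrow> 'x topology" where "sp T = snd (snd T)"

definition obj :: "('g,'x) tg \<Rightarrow> 'x set" where "obj T = topspace (sp T)"
definition arr :: "('g,'x) tg \<Rightarrow> ('g \<times> 'x) set" where "arr T = carrier (grp T) \<times> obj T"
definition arr_top :: "('g,'x) tg \<Rightarrow> ('g \<times> 'x) topology" where
  "arr_top T = prod_topology (discrete_topology (carrier (grp T))) (sp T)"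
definition src :: "'g \<times> 'x \<Rightarrow> 'x" where "src a = snd a"
definition tgt :: "('g,'x) tg \<Rightarrow> 'g \<times> 'x \<Rightarrow> 'x" where "tgt T a = act T (fst a) (snd a)"
text \<open>comp T b a = b \<circ> a for a : x \<rightarrow> gx and b : gx \<rightarrow> hgx, namely (h,gx)\<circ>(g,x) = (hg,x).\<close>
definition comp :: "('g,'x) tg \<Rightarrow> 'g \<times> 'x \<Rightarrow> 'g \<times> 'x \<Rightarrow> 'g \<times> 'x" where
  "comp T b a = (fst b \<otimes>\<^bsub>grp T\<^esub> fst a, snd a)"

definition tgrpd :: "('g,'x) tg \<Rightarrow> bool" where
  "tgrpd T \<longleftrightarrow> group (grp T)
     \<and> (\<forall>x\<in>obj T. act T \<one>\<^bsub>grp T\<^esub> x = x)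
     \<and> (\<forall>g\<in>carrier (grp T). \<forall>h\<in>carrier (grp T). \<forall>x\<in>obj T.
           act T (g \<otimes>\<^bsub>grp T\<^esub> h) x = act T g (act T h x))
     \<and> (\<forall>g\<in>carrier (grp T). continuous_map (sp T) (sp T) (act T g))
     \<and> proper_map (arr_top T) (prod_topology (sp T) (sp T)) (\<lambda>a. (src a, tgt T a))"

type_synonym ('k,'y,'g,'x) emap = "('k \<Rightarrow> 'g) \<times> ('y \<Rightarrow> 'x)"

definition emap :: "('k,'y) tg \<Rightarrow> ('g,'x) tg \<Rightarrow> ('k,'y,'g,'x) emap \<Rightarrow> bool" where
  "emap K G m \<longleftrightarrow> fst m \<in> hom (grp K) (grp G)
     \<and> continuous_map (sp K) (sp G) (snd m)
     \<and> (\<forall>k\<in>carrier (grp K). \<forall>y\<in>obj K. snd m (act K k y) = act G (fst m k) (snd m y))"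

definition arr_map :: "('k,'y,'g,'x) emap \<Rightarrow> 'k \<times> 'y \<Rightarrow> 'g \<times> 'x" where
  "arr_map m a = (fst m (fst a), snd m (snd a))"

definition mcomp :: "('j,'z,'g,'x) emap \<Rightarrow> ('k,'y,'j,'z) emap \<Rightarrow> ('k,'y,'g,'x) emap" where
  "mcomp m n = (fst m \<circ> fst n, snd m \<circ> snd n)"

definition nat_trans :: "('k,'y) tg \<Rightarrow> ('g,'x) tg \<Rightarrow> ('k,'y,'g,'x) emap \<Rightarrow> ('k,'y,'g,'x) emap
     \<Rightarrow> ('y \<Rightarrow> 'g \<times> 'x) \<Rightarrow> bool" where
  "nat_trans K G m m' T \<longleftrightarrow> continuous_map (sp K) (arr_top G) T
     \<and> (\<forall>y\<in>obj K. src (T y) = snd m y \<and> tgt G (T y) = snd m' y)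
     \<and> (\<forall>a\<in>arr K. comp G (arr_map m' a) (T (src a)) = comp G (T (tgt K a)) (arr_map m a))"

definition nat_iso :: "('k,'y) tg \<Rightarrow> ('g,'x) tg \<Rightarrow> ('k,'y,'g,'x) emap \<Rightarrow> ('k,'y,'g,'x) emap \<Rightarrow> bool" where
  "nat_iso K G m m' \<longleftrightarrow> (\<exists>T. nat_trans K G m m' T)"

definition ess_equiv :: "('k,'y) tg \<Rightarrow> ('g,'x) tg \<Rightarrow> ('k,'y,'g,'x) emap \<Rightarrow> bool" where
  "ess_equiv K G e \<longleftrightarrow> emap K G e
     \<and> (let FP = {(a,y). a \<in> arr G \<and> y \<in> obj K \<and> tgt G a = snd e y} in
          open_map (subtopology (prod_topology (arr_top G) (sp K)) FP) (sp G) (\<lambda>(a,y). src a)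
        \<and> (\<lambda>(a,y). src a) ` FP = obj G)
     \<and> (let PB = {(a,(y1,y2)). a \<in> arr G \<and> y1 \<in> obj K \<and> y2 \<in> obj K
                     \<and> src a = snd e y1 \<and> tgt G a = snd e y2} in
          homeomorphic_map (arr_top K)
            (subtopology (prod_topology (arr_top G) (prod_topology (sp K) (sp K))) PB)
            (\<lambda>b. (arr_map e b, (src b, tgt K b))))"

definition gen_map :: "('k,'y) tg \<Rightarrow> ('j,'z) tg \<Rightarrow> ('g,'x) tg
     \<Rightarrow> ('j,'z,'k,'y) emap \<Rightarrow> ('j,'z,'g,'x) emap \<Rightarrow> bool" where
  "gen_map K J G e f \<longleftrightarrow> tgrpd J \<and> ess_equiv J K e \<and> emap J G f"

definition two_iso_by :: "('k,'y) tg \<Rightarrow> ('g,'x) tg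
     \<Rightarrow> ('j,'z) tg \<Rightarrow> ('j,'z,'k,'y) emap \<Rightarrow> ('j,'z,'g,'x) emap
     \<Rightarrow> ('i,'w) tg \<Rightarrow> ('i,'w,'k,'y) emap \<Rightarrow> ('i,'w,'g,'x) emap
     \<Rightarrow> ('l,'v) tg \<Rightarrow> ('l,'v,'j,'z) emap \<Rightarrow> ('l,'v,'i,'w) emap \<Rightarrow> bool" where
  "two_iso_by K G J e f J' e' f' L u v \<longleftrightarrow> tgrpd L
     \<and> ess_equiv L J u \<and> ess_equiv L J' v
     \<and> nat_iso L K (mcomp e u) (mcomp e' v)
     \<and> nat_iso L G (mcomp f u) (mcomp f' v)"

text \<open>(e,f) \<Rightarrow> (e',f') witnessed by a translation groupoid L whose group and space
  live in the types 'l and 'v (given by the itself-arguments).\<close>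
definition two_iso_in :: "'l itself \<Rightarrow> 'v itself \<Rightarrow> ('k,'y) tg \<Rightarrow> ('g,'x) tg
     \<Rightarrow> ('j,'z) tg \<Rightarrow> ('j,'z,'k,'y) emap \<Rightarrow> ('j,'z,'g,'x) emap
     \<Rightarrow> ('i,'w) tg \<Rightarrow> ('i,'w,'k,'y) emap \<Rightarrow> ('i,'w,'g,'x) emap \<Rightarrow> bool" where
  "two_iso_in (_::'l itself) (_::'v itself) K G J e f J' e' f' \<longleftrightarrow>
     (\<exists>(L::('l,'v) tg) u v. two_iso_by K G J e f J' e' f' L u v)"

definition unit_interval :: "real topology" where
  "unit_interval = top_of_set {0..1}"

definition paths :: "'x topology \<Rightarrow> (real \<Rightarrow> 'x) set" where
  "paths X = {\<alpha>. continuous_map unit_interval X \<alpha> \<and> (\<forall>t. t \<notin> {0..1} \<longrightarrow> \<alpha> t = undefined)}"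

text \<open>Compact-open topology on X^I (subbasis: \<alpha> with \<alpha>(C) \<subseteq> U, C compact, U open;
  C = {} gives the whole path space).\<close>
definition path_top :: "'x topology \<Rightarrow> (real \<Rightarrow> 'x) topology" where
  "path_top X = topology_generated_by
     {{\<alpha> \<in> paths X. \<alpha> ` C \<subseteq> U} | C U. compactin unit_interval C \<and> openin X U}"

definition path_act :: "('g \<Rightarrow> 'x \<Rightarrow> 'x) \<Rightarrow> 'g \<Rightarrow> (real \<Rightarrow> 'x) \<Rightarrow> (real \<Rightarrow> 'x)" where
  "path_act a g \<alpha> = (\<lambda>t. if t \<in> {0..1} then a g (\<alpha> t) else undefined)"

definition path_tg :: "('g,'x) tg \<Rightarrow> ('g, real \<Rightarrow> 'x) tg" where
  "path_tg G = (grp G, path_act (act G), path_top (sp G))"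

definition ev :: "real \<Rightarrow> ('g, real \<Rightarrow> 'x, 'g, 'x) emap" where
  "ev i = (id, \<lambda>\<alpha>. \<alpha> i)"

text \<open>Homotopy of generalized maps (e,f) from K via J and (e',f') from K via J' to G:
  a span K \<leftarrow>\<epsilon>\<leftarrow> \<tilde>K\<ltimes>\<tilde>Y \<rightarrow>H\<rightarrow> G\<ltimes>X^I with (e,f) \<Rightarrow> (\<epsilon>, ev_0 H) and (e',f') \<Rightarrow> (\<epsilon>, ev_1 H).\<close>
definition homotopic_in :: "'a itself \<Rightarrow> 'b itself \<Rightarrow> 'l1 itself \<Rightarrow> 'v1 itself
     \<Rightarrow> 'l2 itself \<Rightarrow> 'v2 itself \<Rightarrow> ('k,'y) tg \<Rightarrow> ('g,'x) tg
     \<Rightarrow> ('j,'z) tg \<Rightarrow> ('j,'z,'k,'y) emap \<Rightarrow> ('j,'z,'g,'x) emap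
     \<Rightarrow> ('i,'w) tg \<Rightarrow> ('i,'w,'k,'y) emap \<Rightarrow> ('i,'w,'g,'x) emap \<Rightarrow> bool" where
  "homotopic_in (_::'a itself) (_::'b itself) (_::'l1 itself) (_::'v1 itself)
       (_::'l2 itself) (_::'v2 itself) K G J e f J' e' f' \<longleftrightarrow>
     (\<exists>(Jt::('a,'b) tg) \<epsilon> H. tgrpd Jt \<and> ess_equiv Jt K \<epsilon> \<and> emap Jt (path_tg G) H
        \<and> two_iso_in TYPE('l1) TYPE('v1) K G J e f Jt \<epsilon> (mcomp (ev 0) H)
        \<and> two_iso_in TYPE('l2) TYPE('v2) K G J' e' f' Jt \<epsilon> (mcomp (ev 1) H))"

end

theory Submission
  imports Defs
begin

text \<open>If (\<sigma>,f) \<Rightarrow> (\<tau>,g) is witnessed by L with essential equivalences u : L \<rightarrow> J1 and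
  v : L \<rightarrow> J2, take the span K \<leftarrow> L \<rightarrow> G \<ltimes> X^I with \<epsilon> = \<tau> v and H the constant homotopy
  at g v. Then ev_0 H = ev_1 H = g v, and L itself, mapped by u resp. v and by the identity,
  witnesses (\<sigma>,f) \<Rightarrow> (\<tau> v, g v) and (\<tau>,g) \<Rightarrow> (\<tau> v, g v). The real work is that essential
  equivalences compose: openness of the source map on the fibre product is equivalent to
  openness of the object map (up to translating by the group), and the pullback homeomorphism
  of a composite factors through the pullback homeomorphism of its first factor.\<close>

lemma tgrpd_group: "tgrpd C \<Longrightarrow> group (grp C)"
  unfolding tgrpd_def by blast

lemma act_one: "tgrpd C \<Longrightarrow> x \<in> obj C \<Longrightarrow> act C \<one>\<^bsub>grp C\<^esub> x = x"
  unfolding tgrpd_def by blast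

lemma act_mult:
  "\<lbrakk>tgrpd C; g \<in> carrier (grp C); h \<in> carrier (grp C); x \<in> obj C\<rbrakk>
   \<Longrightarrow> act C (g \<otimes>\<^bsub>grp C\<^esub> h) x = act C g (act C h x)"
  unfolding tgrpd_def by blast

lemma continuous_map_act:
  "tgrpd C \<Longrightarrow> g \<in> carrier (grp C) \<Longrightarrow> continuous_map (sp C) (sp C) (act C g)"
  unfolding tgrpd_def by blast

lemma act_closed: "tgrpd C \<Longrightarrow> g \<in> carrier (grp C) \<Longrightarrow> x \<in> obj C \<Longrightarrow> act C g x \<in> obj C"
  unfolding obj_def by (meson continuous_map_act continuous_map_image_subset_topspace image_subset_iff)

lemma act_inv_act:
  "\<lbrakk>tgrpd C; g \<in> carrier (grp C); x \<in> obj C\<rbrakk> \<Longrightarrow> act C (inv\<^bsub>grp C\<^esub> g) (act C g x) = x"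
  by (metis act_mult act_one tgrpd_group group.inv_closed group.l_inv)

lemma act_act_inv:
  "\<lbrakk>tgrpd C; g \<in> carrier (grp C); x \<in> obj C\<rbrakk> \<Longrightarrow> act C g (act C (inv\<^bsub>grp C\<^esub> g) x) = x"
  by (metis act_mult act_one tgrpd_group group.inv_closed group.r_inv)

lemma open_map_act:
  assumes "tgrpd C" "g \<in> carrier (grp C)"
  shows "open_map (sp C) (sp C) (act C g)"
proof -
  have "homeomorphic_maps (sp C) (sp C) (act C g) (act C (inv\<^bsub>grp C\<^esub> g))"
    using assms by (auto simp: homeomorphic_maps_def continuous_map_act act_inv_act act_act_inv
        tgrpd_group group.inv_closed obj_def[symmetric])
  then show ?thesis
    using homeomorphic_imp_open_map homeomorphic_maps_imp_map by blast
qed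

lemma topspace_arr_top [simp]: "topspace (arr_top C) = arr C"
  unfolding arr_top_def arr_def obj_def by simp

lemma continuous_map_src: "continuous_map (arr_top C) (sp C) src"
  unfolding arr_top_def src_def[abs_def] by (rule continuous_map_snd)

lemma continuous_map_tgt:
  assumes C: "tgrpd C"
  shows "continuous_map (arr_top C) (sp C) (tgt C)"
  unfolding continuous_map_def
proof (intro conjI allI impI)
  show "tgt C \<in> topspace (arr_top C) \<rightarrow> topspace (sp C)"
    using act_closed[OF C, unfolded obj_def] by (auto simp: tgt_def arr_def obj_def)
next
  fix V assume V: "openin (sp C) V"
  have "{a \<in> topspace (arr_top C). tgt C a \<in> V} =
      (\<Union>g\<in>carrier (grp C). {g} \<times> {x \<in> topspace (sp C). act C g x \<in> V})"
    by (auto simp: tgt_def arr_def obj_def)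
  moreover have "openin (sp C) {x \<in> topspace (sp C). act C g x \<in> V}" if "g \<in> carrier (grp C)" for g
    using openin_continuous_map_preimage[OF continuous_map_act[OF C that] V] .
  ultimately show "openin (arr_top C) {a \<in> topspace (arr_top C). tgt C a \<in> V}"
    unfolding arr_top_def by (auto simp: openin_prod_Times_iff intro!: openin_Union)
qed

lemma emap_hom_closed: "emap A C e \<Longrightarrow> k \<in> carrier (grp A) \<Longrightarrow> fst e k \<in> carrier (grp C)"
  unfolding emap_def by (auto intro: hom_in_carrier)

lemma emap_continuous: "emap A C e \<Longrightarrow> continuous_map (sp A) (sp C) (snd e)"
  unfolding emap_def by simp

lemma emap_obj_closed: "emap A C e \<Longrightarrow> y \<in> obj A \<Longrightarrow> snd e y \<in> obj C"
  unfolding obj_def by (meson emap_continuous continuous_map_image_subset_topspace image_subset_iff)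

lemma emap_equivariant:
  "emap A C e \<Longrightarrow> k \<in> carrier (grp A) \<Longrightarrow> y \<in> obj A \<Longrightarrow> snd e (act A k y) = act C (fst e k) (snd e y)"
  unfolding emap_def by simp

lemma emap_id: "emap A A (id, id)"
  unfolding emap_def hom_def by simp

lemma emap_mcomp:
  assumes e1: "emap A B e1" and e2: "emap B C e2"
  shows "emap A C (mcomp e2 e1)"
  using emap_equivariant[OF e2 emap_hom_closed[OF e1] emap_obj_closed[OF e1]] assms
  unfolding emap_def mcomp_def by (auto intro: hom_compose continuous_map_compose)

lemma arr_map_mcomp: "arr_map (mcomp e2 e1) a = arr_map e2 (arr_map e1 a)"
  by (simp add: arr_map_def mcomp_def)

lemma arr_map_arr: "emap A C e \<Longrightarrow> a \<in> arr A \<Longrightarrow> arr_map e a \<in> arr C"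
  unfolding arr_map_def arr_def by (auto intro: emap_hom_closed emap_obj_closed)

lemma src_arr: "a \<in> arr A \<Longrightarrow> src a \<in> obj A"
  by (auto simp: arr_def src_def)

lemma tgt_arr: "tgrpd A \<Longrightarrow> a \<in> arr A \<Longrightarrow> tgt A a \<in> obj A"
  by (auto simp: arr_def tgt_def act_closed)

lemma src_arr_map: "src (arr_map e a) = snd e (src a)"
  by (simp add: arr_map_def src_def)

lemma tgt_arr_map: "emap A C e \<Longrightarrow> a \<in> arr A \<Longrightarrow> tgt C (arr_map e a) = snd e (tgt A a)"
  unfolding arr_map_def arr_def tgt_def by (auto simp: emap_equivariant)

lemma continuous_map_arr_map:
  assumes "emap A C e"
  shows "continuous_map (arr_top A) (arr_top C) (arr_map e)"
proof -
  have "continuous_map (discrete_topology (carrier (grp A))) (discrete_topology (carrier (grp C))) (fst e)"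
    using emap_hom_closed[OF assms] by auto
  then have "continuous_map (arr_top A) (discrete_topology (carrier (grp C))) (fst e \<circ> fst)"
    unfolding arr_top_def by (rule continuous_map_compose[OF continuous_map_fst])
  moreover have "continuous_map (arr_top A) (sp C) (snd e \<circ> snd)"
    unfolding arr_top_def by (rule continuous_map_compose[OF continuous_map_snd emap_continuous[OF assms]])
  ultimately show ?thesis
    unfolding arr_map_def[abs_def] arr_top_def[of C] by (auto intro: continuous_map_pairedI simp: o_def)
qed

definition fibre_prod :: "('k,'y) tg \<Rightarrow> ('g,'x) tg \<Rightarrow> ('k,'y,'g,'x) emap \<Rightarrow> (('g \<times> 'x) \<times> 'y) set" where
  "fibre_prod A C e = {(a,y). a \<in> arr C \<and> y \<in> obj A \<and> tgt C a = snd e y}"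

definition ess_surjective :: "('k,'y) tg \<Rightarrow> ('g,'x) tg \<Rightarrow> ('k,'y,'g,'x) emap \<Rightarrow> bool" where
  "ess_surjective A C e \<longleftrightarrow>
     open_map (subtopology (prod_topology (arr_top C) (sp A)) (fibre_prod A C e)) (sp C) (\<lambda>(a,y). src a)
     \<and> (\<lambda>(a,y). src a) ` fibre_prod A C e = obj C"

definition arrow_pullback :: "('k,'y) tg \<Rightarrow> ('g,'x) tg \<Rightarrow> ('k,'y,'g,'x) emap \<Rightarrow> (('g \<times> 'x) \<times> 'y \<times> 'y) set" where
  "arrow_pullback A C e = {(a,(y1,y2)). a \<in> arr C \<and> y1 \<in> obj A \<and> y2 \<in> obj A
                     \<and> src a = snd e y1 \<and> tgt C a = snd e y2}"

definition pullback_top :: "('k,'y) tg \<Rightarrow> ('g,'x) tg \<Rightarrow> ('k,'y,'g,'x) emap \<Rightarrow> (('g \<times> 'x) \<times> 'y \<times> 'y) topology" where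
  "pullback_top A C e =
     subtopology (prod_topology (arr_top C) (prod_topology (sp A) (sp A))) (arrow_pullback A C e)"

definition pullback_map :: "('k,'y) tg \<Rightarrow> ('k,'y,'g,'x) emap \<Rightarrow> 'k \<times> 'y \<Rightarrow> ('g \<times> 'x) \<times> 'y \<times> 'y" where
  "pullback_map A e b = (arr_map e b, (src b, tgt A b))"

definition fully_faithful :: "('k,'y) tg \<Rightarrow> ('g,'x) tg \<Rightarrow> ('k,'y,'g,'x) emap \<Rightarrow> bool" where
  "fully_faithful A C e \<longleftrightarrow> homeomorphic_map (arr_top A) (pullback_top A C e) (pullback_map A e)"

lemma ess_equiv_iff:
  "ess_equiv A C e \<longleftrightarrow> emap A C e \<and> ess_surjective A C e \<and> fully_faithful A C e"
  unfolding ess_equiv_def ess_surjective_def fully_faithful_def fibre_prod_def arrow_pullback_def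
    pullback_top_def pullback_map_def Let_def by simp

lemma mem_arrow_pullback:
  "p \<in> arrow_pullback A C e \<longleftrightarrow> fst p \<in> arr C \<and> fst (snd p) \<in> obj A \<and> snd (snd p) \<in> obj A
     \<and> src (fst p) = snd e (fst (snd p)) \<and> tgt C (fst p) = snd e (snd (snd p))"
  by (cases p) (auto simp: arrow_pullback_def)

lemma topspace_pullback_top [simp]: "topspace (pullback_top A C e) = arrow_pullback A C e"
  unfolding pullback_top_def arrow_pullback_def obj_def by auto

lemma ess_surjective_open_map:
  assumes C: "tgrpd C" and e: "emap A C e" and E: "ess_surjective A C e"
  shows "open_map (sp A) (sp C) (snd e)"
  unfolding open_map_def
proof (intro allI impI)
  fix U assume U: "openin (sp A) U"
  define one where "one = \<one>\<^bsub>grp C\<^esub>"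
  have one: "one \<in> carrier (grp C)"
    unfolding one_def by (simp add: C tgrpd_group group.is_monoid monoid.one_closed)
  define W where "W = fibre_prod A C e \<inter> (({one} \<times> topspace (sp C)) \<times> U)"
  have "openin (prod_topology (arr_top C) (sp A)) (({one} \<times> topspace (sp C)) \<times> U)"
    using U one unfolding arr_top_def by (simp add: openin_prod_Times_iff)
  then have "openin (subtopology (prod_topology (arr_top C) (sp A)) (fibre_prod A C e)) W"
    unfolding W_def by (rule openin_subtopology_Int2)
  then have "openin (sp C) ((\<lambda>(a,y). src a) ` W)"
    using E unfolding ess_surjective_def open_map_def by blast
  moreover have "(\<lambda>(a,y). src a) ` W = snd e ` U"
  proof -
    have "U \<subseteq> obj A" using openin_subset[OF U] by (simp add: obj_def)
    then have "W = (\<lambda>y. ((one, snd e y), y)) ` U"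
      using one act_one[OF C, folded one_def] emap_obj_closed[OF e]
      by (auto simp: W_def fibre_prod_def arr_def tgt_def obj_def)
    then show ?thesis by (auto simp: src_def image_image)
  qed
  ultimately show "openin (sp C) (snd e ` U)" by simp
qed

lemma ess_surjective_orbit:
  assumes "ess_surjective A C e" and "x \<in> obj C"
  obtains g where "g \<in> carrier (grp C)" and "act C g x \<in> snd e ` obj A"
proof -
  obtain a y where "a \<in> arr C" "y \<in> obj A" "tgt C a = snd e y" "x = src a"
    using assms unfolding ess_surjective_def fibre_prod_def by force
  then show ?thesis using that unfolding arr_def tgt_def src_def by auto
qed

text \<open>The source image of an open W in the fibre product is the union, over g, of the
  translates by g\<inverse> of the e-images of the (open) slices of W at arrows with label g.\<close>
lemma open_map_fibre_prod_src:
  assumes C: "tgrpd C" and e: "emap A C e" and open_e: "open_map (sp A) (sp C) (snd e)"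
  shows "open_map (subtopology (prod_topology (arr_top C) (sp A)) (fibre_prod A C e)) (sp C)
           (\<lambda>(a,y). src a)"
  unfolding open_map_def
proof (intro allI impI)
  let ?P = "subtopology (prod_topology (arr_top C) (sp A)) (fibre_prod A C e)"
  fix W assume W: "openin ?P W"
  have W_sub: "W \<subseteq> fibre_prod A C e" using openin_subset[OF W] by simp
  define ig where "ig g = inv\<^bsub>grp C\<^esub> g" for g
  define slice where "slice g = {y \<in> topspace (sp A). ((g, act C (ig g) (snd e y)), y) \<in> W}" for g
  have ig: "ig g \<in> carrier (grp C)" if "g \<in> carrier (grp C)" for g
    using that C unfolding ig_def by (simp add: tgrpd_group group.inv_closed)
  have image_eq: "(\<lambda>(a,y). src a) ` W = (\<Union>g\<in>carrier (grp C). act C (ig g) ` snd e ` slice g)"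
  proof
    show "(\<lambda>(a,y). src a) ` W \<subseteq> (\<Union>g\<in>carrier (grp C). act C (ig g) ` snd e ` slice g)"
    proof
      fix x assume "x \<in> (\<lambda>(a,y). src a) ` W"
      then obtain g y where gy: "((g,x),y) \<in> W" unfolding src_def by auto
      then have "g \<in> carrier (grp C)" "x \<in> obj C" "y \<in> obj A" "act C g x = snd e y"
        using W_sub unfolding fibre_prod_def arr_def tgt_def by auto
      moreover from this have "x = act C (ig g) (snd e y)"
        using act_inv_act[OF C] unfolding ig_def by metis
      ultimately show "x \<in> (\<Union>g\<in>carrier (grp C). act C (ig g) ` snd e ` slice g)"
        using gy unfolding slice_def obj_def by auto
    qed
    show "(\<Union>g\<in>carrier (grp C). act C (ig g) ` snd e ` slice g) \<subseteq> (\<lambda>(a,y). src a) ` W"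
      unfolding slice_def src_def by force
  qed
  have "openin (sp C) (act C (ig g) ` snd e ` slice g)" if g: "g \<in> carrier (grp C)" for g
  proof -
    define lift where "lift y = ((g, act C (ig g) (snd e y)), y)" for y
    have "continuous_map (sp A) (prod_topology (arr_top C) (sp A)) lift"
      unfolding lift_def arr_top_def using g
      by (auto intro!: continuous_map_pairedI
          continuous_map_compose[OF emap_continuous[OF e] continuous_map_act[OF C ig[OF g]], unfolded o_def])
    moreover have "lift \<in> topspace (sp A) \<rightarrow> fibre_prod A C e"
      using g ig act_closed[OF C] act_act_inv[OF C] emap_obj_closed[OF e]
      unfolding lift_def fibre_prod_def arr_def tgt_def ig_def obj_def by auto
    ultimately have "continuous_map (sp A) ?P lift"
      by (simp add: continuous_map_in_subtopology)
    then have "openin (sp A) (slice g)"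
      using openin_continuous_map_preimage[OF _ W] unfolding slice_def lift_def by blast
    then show ?thesis
      using open_e open_map_act[OF C ig[OF g]] unfolding open_map_def by blast
  qed
  then show "openin (sp C) ((\<lambda>(a,y). src a) ` W)" unfolding image_eq by blast
qed

lemma ess_surjectiveI:
  assumes C: "tgrpd C" and e: "emap A C e" and open_e: "open_map (sp A) (sp C) (snd e)"
    and orbit: "\<And>x. x \<in> obj C \<Longrightarrow> \<exists>g\<in>carrier (grp C). act C g x \<in> snd e ` obj A"
  shows "ess_surjective A C e"
proof -
  have "obj C \<subseteq> (\<lambda>(a,y). src a) ` fibre_prod A C e"
  proof
    fix x assume x: "x \<in> obj C"
    then obtain g y where "g \<in> carrier (grp C)" "y \<in> obj A" "act C g x = snd e y" using orbit by blast
    then have "((g,x),y) \<in> fibre_prod A C e" using x unfolding fibre_prod_def arr_def tgt_def by auto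
    then show "x \<in> (\<lambda>(a,y). src a) ` fibre_prod A C e" unfolding src_def by force
  qed
  moreover have "(\<lambda>(a,y). src a) ` fibre_prod A C e \<subseteq> obj C"
    unfolding fibre_prod_def arr_def src_def by auto
  ultimately show ?thesis
    unfolding ess_surjective_def using open_map_fibre_prod_src[OF C e open_e] by blast
qed

lemma continuous_map_pullback_map:
  assumes "tgrpd A" and "emap A C e"
  shows "continuous_map (arr_top A) (pullback_top A C e) (pullback_map A e)"
proof -
  have "continuous_map (arr_top A) (prod_topology (arr_top C) (prod_topology (sp A) (sp A)))
          (pullback_map A e)"
    unfolding pullback_map_def[abs_def] using assms
    by (intro continuous_map_pairedI continuous_map_arr_map continuous_map_src continuous_map_tgt)
  moreover have "pullback_map A e b \<in> arrow_pullback A C e" if b: "b \<in> arr A" for b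
    using arr_map_arr[OF assms(2) b] tgt_arr_map[OF assms(2) b] src_arr[OF b] tgt_arr[OF assms(1) b]
    unfolding pullback_map_def arrow_pullback_def by (auto simp: src_arr_map)
  ultimately show ?thesis
    unfolding pullback_top_def by (auto simp: continuous_map_in_subtopology)
qed

lemma fully_faithful_id:
  assumes "tgrpd A"
  shows "fully_faithful A A (id, id)"
proof -
  have "homeomorphic_maps (arr_top A) (pullback_top A A (id, id)) (pullback_map A (id, id)) fst"
    unfolding homeomorphic_maps_def
  proof (intro conjI ballI)
    show "continuous_map (arr_top A) (pullback_top A A (id, id)) (pullback_map A (id, id))"
      using assms emap_id by (rule continuous_map_pullback_map)
    show "continuous_map (pullback_top A A (id, id)) (arr_top A) fst"
      unfolding pullback_top_def by (intro continuous_map_from_subtopology continuous_map_fst)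
  qed (auto simp: pullback_map_def arr_map_def arrow_pullback_def)
  then show ?thesis
    unfolding fully_faithful_def using homeomorphic_maps_imp_map by blast
qed

lemma ess_equiv_id:
  assumes "tgrpd A"
  shows "ess_equiv A A (id, id)"
proof -
  have "ess_surjective A A (id, id)"
  proof (rule ess_surjectiveI[OF assms emap_id])
    show "open_map (sp A) (sp A) (snd (id, id))" by (simp add: open_map_id)
    show "\<exists>g\<in>carrier (grp A). act A g x \<in> snd (id, id) ` obj A" if "x \<in> obj A" for x
      using that act_one[OF assms that]
      by (intro bexI[of _ "\<one>\<^bsub>grp A\<^esub>"]) (auto intro: monoid.one_closed group.is_monoid tgrpd_group[OF assms])
  qed
  then show ?thesis
    unfolding ess_equiv_iff using emap_id fully_faithful_id[OF assms] by blast
qed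

lemma homeomorphic_map_pullback_mcomp:
  fixes A :: "('a,'y) tg" and B :: "('b,'z) tg" and C :: "('c,'x) tg"
  assumes e1: "emap A B e1" and e2: "emap B C e2" and ff2: "fully_faithful B C e2"
  shows "homeomorphic_map (pullback_top A B e1) (pullback_top A C (mcomp e2 e1))
           (\<lambda>(a, ys). (arr_map e2 a, ys))"
proof -
  obtain \<Psi> where \<Psi>: "homeomorphic_maps (arr_top B) (pullback_top B C e2) (pullback_map B e2) \<Psi>"
    using ff2 unfolding fully_faithful_def homeomorphic_map_maps by blast
  have \<Psi>_cont: "continuous_map (pullback_top B C e2) (arr_top B) \<Psi>"
    and \<Psi>_left: "\<And>b. b \<in> arr B \<Longrightarrow> \<Psi> (pullback_map B e2 b) = b"
    and \<Psi>_right: "\<And>p. p \<in> arrow_pullback B C e2 \<Longrightarrow> pullback_map B e2 (\<Psi> p) = p"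
    using \<Psi> unfolding homeomorphic_maps_def by auto
  have \<Psi>_arr: "\<Psi> p \<in> arr B" if "p \<in> arrow_pullback B C e2" for p
    using continuous_map_image_subset_topspace[OF \<Psi>_cont] that by auto
  let ?PB1 = "pullback_top A B e1" and ?PB = "pullback_top A C (mcomp e2 e1)"
  define \<Gamma> :: "('b \<times> 'z) \<times> 'y \<times> 'y \<Rightarrow> ('c \<times> 'x) \<times> 'y \<times> 'y"
    where "\<Gamma> = (\<lambda>(a, ys). (arr_map e2 a, ys))"
  define push :: "('c \<times> 'x) \<times> 'y \<times> 'y \<Rightarrow> ('c \<times> 'x) \<times> 'z \<times> 'z"
    where "push = (\<lambda>(c, (y1, y2)). (c, (snd e1 y1, snd e1 y2)))"
  define \<Delta> where "\<Delta> p = (\<Psi> (push p), snd p)" for p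
  have push_in: "push p \<in> arrow_pullback B C e2" if "p \<in> arrow_pullback A C (mcomp e2 e1)" for p
    using that emap_obj_closed[OF e1]
    unfolding push_def arrow_pullback_def mcomp_def by auto
  have \<Delta>_in: "\<Delta> p \<in> arrow_pullback A B e1" if p: "p \<in> arrow_pullback A C (mcomp e2 e1)" for p
    using p \<Psi>_arr[OF push_in[OF p]] \<Psi>_right[OF push_in[OF p]]
    unfolding \<Delta>_def push_def arrow_pullback_def pullback_map_def by auto
  have fst_cont: "continuous_map (pullback_top A D e) (arr_top D) fst"
    and snd_cont: "continuous_map (pullback_top A D e) (prod_topology (sp A) (sp A)) snd"
    for D :: "('u,'v) tg" and e :: "('a,'y,'u,'v) emap"
    unfolding pullback_top_def
    by (intro continuous_map_from_subtopology continuous_map_fst continuous_map_snd)+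
  have "homeomorphic_maps ?PB1 ?PB \<Gamma> \<Delta>"
    unfolding homeomorphic_maps_def
  proof (intro conjI ballI)
    have "continuous_map ?PB1 (prod_topology (arr_top C) (prod_topology (sp A) (sp A))) \<Gamma>"
      unfolding \<Gamma>_def case_prod_beta
      by (intro continuous_map_pairedI snd_cont
          continuous_map_compose[OF fst_cont continuous_map_arr_map[OF e2], unfolded o_def])
    moreover have "\<Gamma> p \<in> arrow_pullback A C (mcomp e2 e1)" if "p \<in> arrow_pullback A B e1" for p
      using that arr_map_arr[OF e2, of "fst p"] tgt_arr_map[OF e2, of "fst p"]
      by (simp add: mem_arrow_pullback \<Gamma>_def case_prod_beta mcomp_def src_arr_map)
    ultimately show "continuous_map ?PB1 ?PB \<Gamma>"
      unfolding pullback_top_def[of A C] by (auto simp: continuous_map_in_subtopology)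
  next
    have "continuous_map ?PB (sp B) (\<lambda>p. snd e1 (f (snd p)))"
      if "continuous_map (prod_topology (sp A) (sp A)) (sp A) f" for f
      using continuous_map_compose[OF continuous_map_compose[OF snd_cont that] emap_continuous[OF e1]]
      by (simp add: o_def)
    then have "continuous_map ?PB (prod_topology (arr_top C) (prod_topology (sp B) (sp B))) push"
      unfolding push_def case_prod_beta
      by (intro continuous_map_pairedI fst_cont) (auto intro: continuous_map_fst continuous_map_snd)
    then have "continuous_map ?PB (pullback_top B C e2) push"
      using push_in unfolding pullback_top_def[of B C] by (auto simp: continuous_map_in_subtopology)
    then have "continuous_map ?PB (prod_topology (arr_top B) (prod_topology (sp A) (sp A))) \<Delta>"
      unfolding \<Delta>_def[abs_def]
      by (intro continuous_map_pairedI snd_cont continuous_map_compose[OF _ \<Psi>_cont, unfolded o_def])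
    then show "continuous_map ?PB ?PB1 \<Delta>"
      using \<Delta>_in unfolding pullback_top_def[of A B] by (auto simp: continuous_map_in_subtopology)
  next
    fix p assume "p \<in> topspace ?PB1"
    then obtain a y1 y2
      where p: "p = (a, (y1, y2))" "a \<in> arr B" "src a = snd e1 y1" "tgt B a = snd e1 y2"
      by (auto simp: arrow_pullback_def)
    then have "push (\<Gamma> p) = pullback_map B e2 a"
      unfolding push_def \<Gamma>_def pullback_map_def by simp
    then show "\<Delta> (\<Gamma> p) = p"
      using \<Psi>_left[OF p(2)] p(1) unfolding \<Delta>_def \<Gamma>_def by simp
  next
    fix p assume "p \<in> topspace ?PB"
    then have p: "p \<in> arrow_pullback A C (mcomp e2 e1)" by simp
    have "arr_map e2 (\<Psi> (push p)) = fst p"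
      using \<Psi>_right[OF push_in[OF p]] unfolding pullback_map_def push_def by (auto simp: case_prod_beta)
    then show "\<Gamma> (\<Delta> p) = p" unfolding \<Gamma>_def \<Delta>_def by simp
  qed
  then show ?thesis unfolding \<Gamma>_def using homeomorphic_maps_imp_map by blast
qed

lemma fully_faithful_mcomp:
  assumes e1: "emap A B e1" and e2: "emap B C e2"
    and ff1: "fully_faithful A B e1" and ff2: "fully_faithful B C e2"
  shows "fully_faithful A C (mcomp e2 e1)"
proof -
  have "pullback_map A (mcomp e2 e1) = (\<lambda>(a, ys). (arr_map e2 a, ys)) \<circ> pullback_map A e1"
    by (simp add: fun_eq_iff pullback_map_def arr_map_mcomp)
  then show ?thesis
    using homeomorphic_map_compose[OF ff1[unfolded fully_faithful_def]
        homeomorphic_map_pullback_mcomp[OF e1 e2 ff2]]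
    unfolding fully_faithful_def by simp
qed

lemma ess_equiv_mcomp:
  assumes B: "tgrpd B" and C: "tgrpd C"
    and E1: "ess_equiv A B e1" and E2: "ess_equiv B C e2"
  shows "ess_equiv A C (mcomp e2 e1)"
proof -
  have e1: "emap A B e1" and es1: "ess_surjective A B e1" and ff1: "fully_faithful A B e1"
    and e2: "emap B C e2" and es2: "ess_surjective B C e2" and ff2: "fully_faithful B C e2"
    using E1 E2 unfolding ess_equiv_iff by auto
  have e: "emap A C (mcomp e2 e1)" using e1 e2 by (rule emap_mcomp)
  have "open_map (sp A) (sp C) (snd (mcomp e2 e1))"
    using open_map_compose[OF ess_surjective_open_map[OF B e1 es1] ess_surjective_open_map[OF C e2 es2]]
    by (simp add: mcomp_def)
  moreover have "\<exists>g\<in>carrier (grp C). act C g x \<in> snd (mcomp e2 e1) ` obj A" if x: "x \<in> obj C" for x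
  proof -
    obtain g y where g: "g \<in> carrier (grp C)" and y: "y \<in> obj B" and gx: "act C g x = snd e2 y"
      using ess_surjective_orbit[OF es2 x] by blast
    obtain h a where h: "h \<in> carrier (grp B)" and a: "a \<in> obj A" and hy: "act B h y = snd e1 a"
      using ess_surjective_orbit[OF es1 y] by blast
    have h': "fst e2 h \<in> carrier (grp C)" using emap_hom_closed[OF e2 h] .
    have "act C (fst e2 h \<otimes>\<^bsub>grp C\<^esub> g) x = act C (fst e2 h) (snd e2 y)"
      using act_mult[OF C h' g x] gx by simp
    also have "\<dots> = snd (mcomp e2 e1) a"
      using emap_equivariant[OF e2 h y] hy by (simp add: mcomp_def)
    finally have "act C (fst e2 h \<otimes>\<^bsub>grp C\<^esub> g) x \<in> snd (mcomp e2 e1) ` obj A"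
      using a by simp
    moreover have "fst e2 h \<otimes>\<^bsub>grp C\<^esub> g \<in> carrier (grp C)"
      using h' g C by (simp add: tgrpd_group group.is_monoid monoid.m_closed)
    ultimately show ?thesis by blast
  qed
  ultimately show ?thesis
    unfolding ess_equiv_iff
    using e ess_surjectiveI[OF C e] fully_faithful_mcomp[OF e1 e2 ff1 ff2] by blast
qed

lemma nat_iso_refl:
  assumes G: "tgrpd G" and m: "emap L G m"
  shows "nat_iso L G m m"
proof -
  define one where "one = \<one>\<^bsub>grp G\<^esub>"
  have one: "one \<in> carrier (grp G)"
    unfolding one_def by (simp add: G tgrpd_group group.is_monoid monoid.one_closed)
  define T where "T y = (one, snd m y)" for y
  have "continuous_map (sp L) (arr_top G) T"
    unfolding T_def[abs_def] arr_top_def using one emap_continuous[OF m]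
    by (intro continuous_map_pairedI) auto
  moreover have "\<forall>y\<in>obj L. src (T y) = snd m y \<and> tgt G (T y) = snd m y"
    using act_one[OF G, folded one_def] emap_obj_closed[OF m] by (simp add: T_def src_def tgt_def)
  moreover have "\<forall>a\<in>arr L. comp G (arr_map m a) (T (src a)) = comp G (T (tgt L a)) (arr_map m a)"
    using emap_hom_closed[OF m] tgrpd_group[OF G]
    by (auto simp: T_def one_def arr_def comp_def arr_map_def src_def
        group.is_monoid monoid.l_one monoid.r_one)
  ultimately show ?thesis
    unfolding nat_iso_def nat_trans_def by blast
qed

definition const_path :: "'x \<Rightarrow> real \<Rightarrow> 'x" where
  "const_path x = (\<lambda>t. if t \<in> {0..1} then x else undefined)"

lemma const_path_in_paths:
  assumes "x \<in> topspace X"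
  shows "const_path x \<in> paths X"
proof -
  have "continuous_map unit_interval X (\<lambda>t. x)" using assms by simp
  then have "continuous_map unit_interval X (const_path x)"
    by (rule continuous_map_eq) (simp add: const_path_def unit_interval_def)
  then show ?thesis unfolding paths_def by (simp add: const_path_def)
qed

lemma continuous_map_const_path:
  assumes f: "continuous_map X Y f"
  shows "continuous_map X (path_top Y) (\<lambda>z. const_path (f z))"
proof -
  have in_paths: "const_path (f z) \<in> paths Y" if "z \<in> topspace X" for z
    using f that by (simp add: const_path_in_paths continuous_map_def Pi_iff)
  show ?thesis
    unfolding path_top_def
  proof (rule continuous_on_generated_topo)
    fix U assume "U \<in> {{\<alpha> \<in> paths Y. \<alpha> ` C \<subseteq> V} | C V. compactin unit_interval C \<and> openin Y V}"
    then obtain C V where U: "U = {\<alpha> \<in> paths Y. \<alpha> ` C \<subseteq> V}"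
      and C: "compactin unit_interval C" and V: "openin Y V" by blast
    have "C \<subseteq> {0..1}" using compactin_subset_topspace[OF C] by (simp add: unit_interval_def)
    then have img: "const_path y ` C = {y}" if "C \<noteq> {}" for y
      using that by (auto simp: const_path_def)
    show "openin X ((\<lambda>z. const_path (f z)) -` U \<inter> topspace X)"
    proof (cases "C = {}")
      case True
      then have "(\<lambda>z. const_path (f z)) -` U \<inter> topspace X = topspace X"
        using in_paths by (auto simp: U)
      then show ?thesis by simp
    next
      case False
      then have "(\<lambda>z. const_path (f z)) -` U \<inter> topspace X = {z \<in> topspace X. f z \<in> V}"
        using in_paths by (auto simp: U img[OF False] simp del: image_subset_iff)
      then show ?thesis using openin_continuous_map_preimage[OF f V] by simp
    qed
  next
    have "const_path (f z) \<in> {\<alpha> \<in> paths Y. \<alpha> ` {} \<subseteq> topspace Y}" if "z \<in> topspace X" for z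
      using in_paths[OF that] by simp
    then show "(\<lambda>z. const_path (f z)) ` topspace X
        \<subseteq> \<Union> {{\<alpha> \<in> paths Y. \<alpha> ` C \<subseteq> V} | C V. compactin unit_interval C \<and> openin Y V}"
      by blast
  qed
qed

definition const_homotopy :: "('k,'y,'g,'x) emap \<Rightarrow> ('k,'y,'g,real \<Rightarrow> 'x) emap" where
  "const_homotopy m = (fst m, \<lambda>z. const_path (snd m z))"

lemma path_tg_simps [simp]:
  "grp (path_tg G) = grp G" "act (path_tg G) = path_act (act G)" "sp (path_tg G) = path_top (sp G)"
  by (simp_all add: path_tg_def grp_def act_def sp_def)

lemma emap_const_homotopy:
  assumes m: "emap L G m"
  shows "emap L (path_tg G) (const_homotopy m)"
  using m continuous_map_const_path[OF emap_continuous[OF m]] unfolding emap_def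
  by (simp add: const_homotopy_def path_act_def const_path_def fun_eq_iff)

lemma ev_const_homotopy: "i \<in> {0..1} \<Longrightarrow> mcomp (ev i) (const_homotopy m) = m"
  by (simp add: mcomp_def ev_def const_homotopy_def const_path_def o_def)

lemma mcomp_id_right [simp]: "mcomp m (id, id) = m"
  by (simp add: mcomp_def)

lemma two_iso_by_precomp:
  assumes "tgrpd K" "tgrpd G" "tgrpd L" and u: "ess_equiv L J u"
    and "emap J K e" "emap J G f"
  shows "two_iso_by K G J e f L (mcomp e u) (mcomp f u) L u (id, id)"
proof -
  have "emap L J u" using u by (simp add: ess_equiv_iff)
  then show ?thesis
    using assms unfolding two_iso_by_def
    by (simp add: ess_equiv_id nat_iso_refl emap_mcomp)
qed

lemma two_iso_by_retarget:
  assumes "two_iso_by K G J e f J' e' f' L u v"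
  shows "two_iso_by K G J e f L (mcomp e' v) (mcomp f' v) L u (id, id)"
  using assms unfolding two_iso_by_def by (simp add: ess_equiv_id)

theorem mainTheorem10:
  fixes K :: "('k,'y) tg" and G :: "('g,'x) tg"
    and J1 :: "('k1,'y1) tg" and \<sigma> :: "('k1,'y1,'k,'y) emap" and f :: "('k1,'y1,'g,'x) emap"
    and J2 :: "('k2,'y2) tg" and \<tau> :: "('k2,'y2,'k,'y) emap" and g :: "('k2,'y2,'g,'x) emap"
  assumes "tgrpd K" and "tgrpd G"
    and "gen_map K J1 G \<sigma> f"
    and "gen_map K J2 G \<tau> g"
    and "two_iso_in TYPE('lg) TYPE('ly) K G J1 \<sigma> f J2 \<tau> g"
  shows "homotopic_in TYPE('lg) TYPE('ly) TYPE('lg) TYPE('ly) TYPE('lg) TYPE('ly)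
           K G J1 \<sigma> f J2 \<tau> g"
proof -
  obtain L :: "('lg,'ly) tg" and u v where Luv: "two_iso_by K G J1 \<sigma> f J2 \<tau> g L u v"
    using assms(5) unfolding two_iso_in_def by blast
  have L: "tgrpd L" and v: "ess_equiv L J2 v"
    using Luv unfolding two_iso_by_def by auto
  have J2: "tgrpd J2" and \<tau>: "ess_equiv J2 K \<tau>" and g: "emap J2 G g"
    using assms(4) unfolding gen_map_def by auto
  let ?\<epsilon> = "mcomp \<tau> v" and ?H = "const_homotopy (mcomp g v)"
  have \<epsilon>: "ess_equiv L K ?\<epsilon>" using J2 assms(1) v \<tau> by (rule ess_equiv_mcomp)
  have "emap L J2 v" using v by (simp add: ess_equiv_iff)
  then have H: "emap L (path_tg G) ?H" using g by (intro emap_const_homotopy emap_mcomp)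
  have "two_iso_by K G J1 \<sigma> f L ?\<epsilon> (mcomp (ev 0) ?H) L u (id, id)"
    using two_iso_by_retarget[OF Luv] by (simp add: ev_const_homotopy)
  moreover have "two_iso_by K G J2 \<tau> g L ?\<epsilon> (mcomp (ev 1) ?H) L v (id, id)"
    using two_iso_by_precomp[OF assms(1,2) L v] \<tau> g by (simp add: ess_equiv_iff ev_const_homotopy)
  ultimately show ?thesis
    unfolding homotopic_in_def two_iso_in_def using L \<epsilon> H by blast
qed

end
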